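(* Let $\phi$ be a reduced Boolean formula in the input variables $x_1,\dots,x_n$ and let $Q \subseteq [0,1]^n$ be a polytope such that $\phi(Q) \neq \emptyset$. Then $\phi(Q)$ is a polytope with extension complexity $\operatorname{xc}(\phi(Q)) \le |\phi| \operatorname{xc}(Q)$.
   Context: Boolean formulas are built from input variables $x_1,\dots,x_n$ using $\wedge$, $\vee$, $\neg$. A formula is reduced if negations are applied only to input variables. The size $|\phi|$ of a formula is the total number of occurrences of input variables in it. For a reduced formula $\phi$ and a convex set $Q \subseteq [0,1]^n$, the set $\phi(Q)$ is defined recursively: a non-negated variable $x_i$ is replaced by $\{x \in Q : x_i = 1\}$; a negated variable $\neg x_i$ by $\{x \in Q : x_i = 0\}$; a conjunction of two subformulas by the intersection of the corresponding sets; a disjunction by the convex hull of the union of the corresponding sets. An extended formulation of size $m$ of a polytope $P \subseteq \mathbb{R}^n$ consists of $T \in \mathbb{R}^{n\times d}$, $A \in \mathbb{R}^{m \times d}$, $t \in \mathbb{R}^n$, $b \in \mathbb{R}^m$ with $P = \{x : \exists y \in \mathbb{R}^d,\ Ay \ge b,\ x = Ty+t\}$; the extension complexity $\operatorname{xc}(P)$ is the smallest size of an extended formulation of $P$. *)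

theory Defs
  imports "HOL-Analysis.Analysis"
begin

text \<open>Reduced Boolean formulas over input variables indexed by the finite type 'n
  (negation only on variables).\<close>
datatype 'i rformula =
    PosVar 'i
  | NegVar 'i
  | Conj "'i rformula" "'i rformula"
  | Disj "'i rformula" "'i rformula"

fun fsize :: "'i rformula \<Rightarrow> nat" where
  "fsize (PosVar i) = 1"
| "fsize (NegVar i) = 1"
| "fsize (Conj a b) = fsize a + fsize b"
| "fsize (Disj a b) = fsize a + fsize b"

fun fapply :: "'n rformula \<Rightarrow> (real ^ 'n) set \<Rightarrow> (real ^ 'n) set" where
  "fapply (PosVar i) Q = {x \<in> Q. x $ i = 1}"
| "fapply (NegVar i) Q = {x \<in> Q. x $ i = 0}"
| "fapply (Conj a b) Q = fapply a Q \<inter> fapply b Q"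
| "fapply (Disj a b) Q = convex hull (fapply a Q \<union> fapply b Q)"

text \<open>Vectors in R^d are functions on
  {..<d} (values outside are irrelevant).\<close>
definition has_ext_formulation :: "(real ^ 'n) set \<Rightarrow> nat \<Rightarrow> bool" where
  "has_ext_formulation P m \<longleftrightarrow>
     (\<exists>(d::nat) (T :: 'n \<Rightarrow> nat \<Rightarrow> real) (A :: nat \<Rightarrow> nat \<Rightarrow> real)
        (t :: real ^ 'n) (b :: nat \<Rightarrow> real).
        P = {x. \<exists>y :: nat \<Rightarrow> real.
                 (\<forall>i<m. (\<Sum>j<d. A i j * y j) \<ge> b i) \<and>
                 x = (\<chi> k. (\<Sum>j<d. T k j * y j) + t $ k)})"

definition xc :: "(real ^ 'n) set \<Rightarrow> nat" where
  "xc P = (LEAST m. has_ext_formulation P m)"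

end

(*
  An extended formulation of Q is turned into one of phi(Q) by structural induction on phi.
  A literal x_i = c adds one equation, a conjunction takes the product of the two
  formulations glued by equations identifying their images, and a disjunction uses Balas'
  description of the convex hull of a union, in which each formulation is homogenised by a
  new scalar variable l resp. 1 - l. Equations are free: as long as the set is nonempty they
  can be eliminated by solving for a variable and substituting. So only the inequalities are
  counted, and every literal contributes those of one copy of Q. Balas' construction is exact
  because the image of a bounded set does not move along recession directions of its
  formulation.
*)
theory Submission
  imports Defs
begin

section \<open>Affine functions of finitely many variables\<close>

text \<open>Variables are vectors y :: nat \<Rightarrow> real of unbounded length, so that formulations
  in different numbers of variables can be combined; an affine function only looks at the
  first d coordinates.\<close>

definition affine_fun :: "nat \<Rightarrow> ((nat \<Rightarrow> real) \<Rightarrow> real) \<Rightarrow> bool" where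
  "affine_fun d f \<longleftrightarrow> (\<exists>a c. \<forall>y. f y = (\<Sum>j<d. a j * y j) + c)"

lemma affine_fun_const: "affine_fun d (\<lambda>y. c)"
  unfolding affine_fun_def by (rule exI[of _ "\<lambda>j. 0"]) simp

lemma affine_fun_coord: "j < d \<Longrightarrow> affine_fun d (\<lambda>y. y j)"
  unfolding affine_fun_def
  by (rule exI[of _ "\<lambda>i. of_bool (i = j)"], rule exI[of _ 0]) simp

lemma affine_fun_add: "affine_fun d f \<Longrightarrow> affine_fun d g \<Longrightarrow> affine_fun d (\<lambda>y. f y + g y)"
  unfolding affine_fun_def
  by (elim exE, rule_tac x="\<lambda>j. a j + aa j" in exI) (auto simp: algebra_simps sum.distrib)

lemma affine_fun_scale: "affine_fun d f \<Longrightarrow> affine_fun d (\<lambda>y. r * f y)"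
  unfolding affine_fun_def
  by (elim exE, rule_tac x="\<lambda>j. r * a j" in exI) (auto simp: algebra_simps sum_distrib_left)

lemma affine_fun_diff: "affine_fun d f \<Longrightarrow> affine_fun d g \<Longrightarrow> affine_fun d (\<lambda>y. f y - g y)"
  using affine_fun_add[of d f "\<lambda>y. (-1) * g y"] affine_fun_scale[of d g "-1"] by simp

lemma affine_fun_sum:
  "finite I \<Longrightarrow> (\<And>i. i \<in> I \<Longrightarrow> affine_fun d (f i)) \<Longrightarrow> affine_fun d (\<lambda>y. \<Sum>i\<in>I. f i y)"
  by (induction I rule: finite_induct) (auto intro: affine_fun_const affine_fun_add)

lemma affine_fun_subst:
  assumes "affine_fun d f" "\<And>j. j < d \<Longrightarrow> affine_fun d' (g j)"
  shows "affine_fun d' (\<lambda>y. f (\<lambda>j. g j y))"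
proof -
  obtain a c where "\<And>y. f y = (\<Sum>j<d. a j * y j) + c"
    using assms(1) unfolding affine_fun_def by blast
  then show ?thesis
    by (simp, intro affine_fun_add affine_fun_sum affine_fun_scale affine_fun_const assms(2)) auto
qed

lemma affine_fun_mono: "affine_fun d f \<Longrightarrow> d \<le> d' \<Longrightarrow> affine_fun d' f"
  using affine_fun_subst[of d f d' "\<lambda>j y. y j"] affine_fun_coord by simp

lemma affine_fun_cong: "affine_fun d f \<Longrightarrow> (\<And>j. j < d \<Longrightarrow> y j = y' j) \<Longrightarrow> f y = f y'"
  unfolding affine_fun_def by auto

lemma affine_fun_combination:
  assumes "affine_fun d f"
  shows "f (\<lambda>j. \<alpha> * u j + \<beta> * v j) = \<alpha> * f u + \<beta> * f v + (1 - \<alpha> - \<beta>) * f (\<lambda>j. 0)"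
proof -
  obtain a c where "\<And>y. f y = (\<Sum>j<d. a j * y j) + c"
    using assms unfolding affine_fun_def by blast
  then show ?thesis
    by (simp add: algebra_simps sum.distrib sum_distrib_left)
qed

definition shift_vars :: "nat \<Rightarrow> (nat \<Rightarrow> real) \<Rightarrow> nat \<Rightarrow> real" where
  "shift_vars e y j = y (j + e)"

definition join_vars :: "nat \<Rightarrow> (nat \<Rightarrow> real) \<Rightarrow> (nat \<Rightarrow> real) \<Rightarrow> nat \<Rightarrow> real" where
  "join_vars d y z j = (if j < d then y j else z (j - d))"

lemma shift_join_vars [simp]: "shift_vars d (join_vars d y z) = z"
  unfolding shift_vars_def join_vars_def by auto

lemma affine_fun_join_vars: "affine_fun d f \<Longrightarrow> f (join_vars d y z) = f y"
  by (rule affine_fun_cong) (auto simp: join_vars_def)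

lemma affine_fun_shift_vars: "affine_fun d f \<Longrightarrow> affine_fun (e + d) (\<lambda>y. f (shift_vars e y))"
  unfolding shift_vars_def by (rule affine_fun_subst) (auto intro: affine_fun_coord)

text \<open>For f y = a \<bullet> y + c this is the homogenisation a \<bullet> z + l * c.\<close>

definition homog :: "((nat \<Rightarrow> real) \<Rightarrow> real) \<Rightarrow> (nat \<Rightarrow> real) \<Rightarrow> real \<Rightarrow> real" where
  "homog f z l = f z + (l - 1) * f (\<lambda>j. 0)"

lemma homog_scale: "affine_fun d f \<Longrightarrow> homog f (\<lambda>j. l * y j) l = l * f y"
  using affine_fun_combination[of d f l y 0 "\<lambda>j. 0"] unfolding homog_def by (simp add: algebra_simps)

lemma homog_ray: "affine_fun d f \<Longrightarrow> f (\<lambda>j. y j + t * v j) = f y + t * homog f v 0"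
  using affine_fun_combination[of d f 1 y t v] unfolding homog_def by (simp add: algebra_simps)

lemma homog_diff: "affine_fun d f \<Longrightarrow> homog f (\<lambda>j. y j - w j) 0 = f y - f w"
  using affine_fun_combination[of d f 1 y "-1" w] unfolding homog_def by simp

lemma homog_join_vars: "affine_fun d f \<Longrightarrow> homog f (join_vars d y z) l = homog f y l"
  unfolding homog_def by (simp add: affine_fun_join_vars)

lemma affine_fun_homog:
  assumes "affine_fun d (\<lambda>y. f (s y))" "affine_fun d l"
  shows "affine_fun d (\<lambda>y. homog f (s y) (l y))"
proof -
  have "homog f (s y) (l y) = f (s y) + f (\<lambda>j. 0) * l y - f (\<lambda>j. 0)" for y
    unfolding homog_def by (simp add: algebra_simps)
  then show ?thesis
    by (simp, intro affine_fun_diff affine_fun_add affine_fun_scale affine_fun_const assms)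
qed

section \<open>Extended formulations with equations\<close>

definition feasible :: "(nat \<Rightarrow> (nat \<Rightarrow> real) \<Rightarrow> real) \<Rightarrow> ((nat \<Rightarrow> real) \<Rightarrow> real) set
    \<Rightarrow> nat \<Rightarrow> (nat \<Rightarrow> real) \<Rightarrow> bool" where
  "feasible G E m y \<longleftrightarrow> (\<forall>i<m. 0 \<le> G i y) \<and> (\<forall>e\<in>E. e y = 0)"

lemma feasible_append:
  "feasible (\<lambda>i. if i < m1 then G1 i else G2 (i - m1)) (E1 \<union> E2) (m1 + m2) y
     \<longleftrightarrow> feasible G1 E1 m1 y \<and> feasible G2 E2 m2 y"
proof -
  have "(\<forall>i<m1 + m2. 0 \<le> (if i < m1 then G1 i else G2 (i - m1)) y)
      \<longleftrightarrow> (\<forall>i<m1. 0 \<le> G1 i y) \<and> (\<forall>i<m2. 0 \<le> G2 i y)"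
    by (auto, metis add.commute add_diff_cancel_right' add_less_cancel_right not_add_less2)
  then show ?thesis unfolding feasible_def by blast
qed

definition eval_map :: "('n \<Rightarrow> (nat \<Rightarrow> real) \<Rightarrow> real) \<Rightarrow> (nat \<Rightarrow> real) \<Rightarrow> real ^ 'n" where
  "eval_map F y = (\<chi> k. F k y)"

lemma eval_map_nth [simp]: "eval_map F y $ k = F k y"
  by (simp add: eval_map_def)

text \<open>An extended formulation whose affine equations E are not counted in its size m.\<close>

definition ext_rep :: "nat \<Rightarrow> ('n \<Rightarrow> (nat \<Rightarrow> real) \<Rightarrow> real) \<Rightarrow> (nat \<Rightarrow> (nat \<Rightarrow> real) \<Rightarrow> real)
    \<Rightarrow> ((nat \<Rightarrow> real) \<Rightarrow> real) set \<Rightarrow> nat \<Rightarrow> (real ^ 'n) set \<Rightarrow> bool" where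
  "ext_rep d F G E m P \<longleftrightarrow> (\<forall>k. affine_fun d (F k)) \<and> (\<forall>i. affine_fun d (G i)) \<and> finite E
     \<and> (\<forall>e\<in>E. affine_fun d e) \<and> P = eval_map F ` {y. feasible G E m y}"

definition has_ext_rep :: "(real ^ 'n) set \<Rightarrow> nat \<Rightarrow> bool" where
  "has_ext_rep P m \<longleftrightarrow> (\<exists>d F G E. ext_rep d F G E m P)"

lemma ext_formulation_eq_image:
  "{x. \<exists>y. (\<forall>i<m. (\<Sum>j<d. A i j * y j) \<ge> b i) \<and> x = (\<chi> k. (\<Sum>j<d. T k j * y j) + t $ k)}
   = eval_map (\<lambda>k y. (\<Sum>j<d. T k j * y j) + t $ k)
       ` {y. feasible (\<lambda>i y. (\<Sum>j<d. A i j * y j) + - b i) {} m y}"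
  by (auto simp: feasible_def eval_map_def)

lemma has_ext_formulation_iff_ext_rep:
  "has_ext_formulation P m \<longleftrightarrow> (\<exists>d F G. ext_rep d F G {} m P)"
proof
  assume "has_ext_formulation P m"
  then obtain d T A t b where "P = {x. \<exists>y :: nat \<Rightarrow> real. (\<forall>i<m. (\<Sum>j<d. A i j * y j) \<ge> b i)
      \<and> x = (\<chi> k. (\<Sum>j<d. T k j * y j) + t $ k)}"
    unfolding has_ext_formulation_def by blast
  then show "\<exists>d F G. ext_rep d F G {} m P"
    unfolding ext_formulation_eq_image ext_rep_def affine_fun_def
    by (intro exI[of _ d] exI[of _ "\<lambda>k y. (\<Sum>j<d. T k j * y j) + t $ k"]
        exI[of _ "\<lambda>i y. (\<Sum>j<d. A i j * y j) + - b i"]) blast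
next
  assume "\<exists>d F G. ext_rep d F G {} m P"
  then obtain d F G where rep: "ext_rep d F G {} m P" by blast
  then obtain T t where "\<And>k y. F k y = (\<Sum>j<d. T k j * y j) + t k"
    unfolding ext_rep_def affine_fun_def by metis
  then have F: "F = (\<lambda>k y. (\<Sum>j<d. T k j * y j) + (\<chi> k. t k) $ k)" by auto
  obtain A c where "\<And>i y. G i y = (\<Sum>j<d. A i j * y j) + c i"
    using rep unfolding ext_rep_def affine_fun_def by metis
  then have G: "G = (\<lambda>i y. (\<Sum>j<d. A i j * y j) + - (- c i))" by auto
  show "has_ext_formulation P m"
    using rep unfolding has_ext_formulation_def ext_rep_def F G ext_formulation_eq_image[symmetric]
    by (intro exI[of _ d] exI[of _ T] exI[of _ A] exI[of _ "\<chi> k. t k"] exI[of _ "\<lambda>i. - c i"]) blast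
qed

lemma ext_rep_subst:
  assumes rep: "ext_rep d F G E m P" and "e \<in> E"
    and \<sigma>_affine: "\<And>f. affine_fun d f \<Longrightarrow> affine_fun d (\<lambda>y. f (\<sigma> y))"
    and \<sigma>_solves: "\<And>y. e (\<sigma> y) = 0" and \<sigma>_fixes: "\<And>y. e y = 0 \<Longrightarrow> \<sigma> y = y"
  shows "ext_rep d (\<lambda>k y. F k (\<sigma> y)) (\<lambda>i y. G i (\<sigma> y)) ((\<lambda>f y. f (\<sigma> y)) ` (E - {e})) m P"
proof -
  have "{y. feasible G E m y} = \<sigma> ` {y. feasible G E m (\<sigma> y)}"
  proof (intro equalityI subsetI)
    fix y assume y: "y \<in> {y. feasible G E m y}"
    then have "\<sigma> y = y" using \<sigma>_fixes \<open>e \<in> E\<close> unfolding feasible_def by simp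
    with y show "y \<in> \<sigma> ` {y. feasible G E m (\<sigma> y)}" by (metis (mono_tags) image_eqI mem_Collect_eq)
  qed auto
  moreover have "feasible G E m (\<sigma> y) \<longleftrightarrow>
      feasible (\<lambda>i y. G i (\<sigma> y)) ((\<lambda>f y. f (\<sigma> y)) ` (E - {e})) m y" for y
    using \<sigma>_solves \<open>e \<in> E\<close> unfolding feasible_def by auto
  ultimately show ?thesis
    using rep \<sigma>_affine unfolding ext_rep_def by (simp add: image_image eval_map_def)
qed

text \<open>Solve e for a variable occurring in it and substitute; a constant e is 0 since P is nonempty.\<close>

lemma ext_rep_remove_eq:
  assumes rep: "ext_rep d F G E m P" and "P \<noteq> {}" "e \<in> E"
  shows "\<exists>F' G' E'. card E' < card E \<and> ext_rep d F' G' E' m P"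
proof -
  have "finite E" and e_affine: "affine_fun d e" using rep \<open>e \<in> E\<close> unfolding ext_rep_def by auto
  then have card_less: "card (f ` (E - {e})) < card E" for f
    using card_image_le[of "E - {e}" f] card_Diff1_less[OF _ \<open>e \<in> E\<close>] by simp
  obtain a c where e: "\<And>y. e y = (\<Sum>j<d. a j * y j) + c"
    using e_affine unfolding affine_fun_def by blast
  show ?thesis
  proof (cases "\<exists>j0<d. a j0 \<noteq> 0")
    case True
    then obtain j0 where j0: "j0 < d" "a j0 \<noteq> 0" by blast
    define \<sigma> where "\<sigma> y = y(j0 := y j0 - e y / a j0)" for y
    have e_upd: "e (y(j0 := v)) = e y + a j0 * (v - y j0)" for y v
    proof -
      have "a j * (y(j0 := v)) j = a j * y j + (if j = j0 then a j0 * (v - y j0) else 0)" for j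
        by (simp add: algebra_simps)
      then show ?thesis using j0(1) unfolding e by (simp add: sum.distrib)
    qed
    have "affine_fun d (\<lambda>y. y j0 - e y / a j0)"
      using affine_fun_diff[OF affine_fun_coord[OF j0(1)] affine_fun_scale[OF e_affine, of "1 / a j0"]]
      by simp
    then have \<sigma>_coord: "affine_fun d (\<lambda>y. if j = j0 then y j0 - e y / a j0 else y j)" if "j < d" for j
      using that by (cases "j = j0") (auto intro: affine_fun_coord)
    have "affine_fun d (\<lambda>y. f (\<sigma> y))" if "affine_fun d f" for f
      using affine_fun_subst[OF that \<sigma>_coord] unfolding \<sigma>_def fun_upd_def .
    moreover have "e (\<sigma> y) = 0" for y using j0(2) by (simp add: \<sigma>_def e_upd)
    moreover have "\<sigma> y = y" if "e y = 0" for y using that by (simp add: \<sigma>_def)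
    ultimately show ?thesis using ext_rep_subst[OF rep \<open>e \<in> E\<close>] card_less by blast
  next
    case False
    then have e_const: "e y = c" for y by (simp add: e)
    obtain y where "feasible G E m y" using rep \<open>P \<noteq> {}\<close> unfolding ext_rep_def by blast
    then have "c = 0" using \<open>e \<in> E\<close> e_const unfolding feasible_def by metis
    then have "feasible G (E - {e}) m y \<longleftrightarrow> feasible G E m y" for y
      using e_const unfolding feasible_def by auto
    then have "ext_rep d F G (E - {e}) m P" using rep unfolding ext_rep_def by auto
    then show ?thesis using card_less[of id] by auto
  qed
qed

lemma ext_rep_elim_eqs:
  assumes "ext_rep d F G E m P" "P \<noteq> {}"
  shows "\<exists>F' G'. ext_rep d F' G' {} m P"
  using assms
proof (induction "card E" arbitrary: F G E rule: less_induct)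
  case less
  show ?case
  proof (cases "E = {}")
    case False
    then obtain e where "e \<in> E" by blast
    then show ?thesis using less ext_rep_remove_eq by metis
  qed (use less.prems in blast)
qed

lemma has_ext_rep_coord_eq:
  assumes "has_ext_rep Q m"
  shows "has_ext_rep {x \<in> Q. x $ i = c} m"
proof -
  obtain d F G E where "ext_rep d F G E m Q" using assms unfolding has_ext_rep_def by blast
  then have "ext_rep d F G (insert (\<lambda>y. F i y - c) E) m {x \<in> Q. x $ i = c}"
    using affine_fun_diff[OF _ affine_fun_const] unfolding ext_rep_def feasible_def by auto
  then show ?thesis unfolding has_ext_rep_def by blast
qed

lemma has_ext_rep_mono:
  assumes "has_ext_rep P m" "m \<le> m'"
  shows "has_ext_rep P m'"
proof -
  obtain d F G E where rep: "ext_rep d F G E m P" using assms(1) unfolding has_ext_rep_def by blast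
  have "feasible (\<lambda>i. if i < m then G i else (\<lambda>y. 1)) E m' y \<longleftrightarrow> feasible G E m y" for y
    using assms(2) unfolding feasible_def by auto
  then have "ext_rep d F (\<lambda>i. if i < m then G i else (\<lambda>y. 1)) E m' P"
    using rep affine_fun_const unfolding ext_rep_def by auto
  then show ?thesis unfolding has_ext_rep_def by blast
qed

lemma ext_rep_join_vars:
  assumes "ext_rep d F G E m P"
  shows "feasible G E m (join_vars d y z) \<longleftrightarrow> feasible G E m y"
    and "eval_map F (join_vars d y z) = eval_map F y"
proof -
  have "G i (join_vars d y z) = G i y" "F k (join_vars d y z) = F k y" for i k
    using assms affine_fun_join_vars unfolding ext_rep_def by blast+
  moreover have "e (join_vars d y z) = e y" if "e \<in> E" for e
    using assms that affine_fun_join_vars unfolding ext_rep_def by blast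
  then have "(\<forall>e\<in>E. e (join_vars d y z) = 0) \<longleftrightarrow> (\<forall>e\<in>E. e y = 0)" by metis
  ultimately show "feasible G E m (join_vars d y z) \<longleftrightarrow> feasible G E m y"
    and "eval_map F (join_vars d y z) = eval_map F y"
    unfolding feasible_def vec_eq_iff by simp_all
qed

lemma has_ext_rep_Int:
  fixes P1 P2 :: "(real ^ 'n::finite) set"
  assumes "has_ext_rep P1 m1" "has_ext_rep P2 m2"
  shows "has_ext_rep (P1 \<inter> P2) (m1 + m2)"
proof -
  obtain d1 F1 G1 E1 d2 F2 G2 E2 where
    rep1: "ext_rep d1 F1 G1 E1 m1 P1" and rep2: "ext_rep d2 F2 G2 E2 m2 P2"
    using assms unfolding has_ext_rep_def by blast
  define G where "G i = (if i < m1 then G1 i else (\<lambda>y. G2 (i - m1) (shift_vars d1 y)))" for i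
  define E where "E = E1 \<union> ((\<lambda>e y. e (shift_vars d1 y)) ` E2
    \<union> range (\<lambda>k y. F1 k y - F2 k (shift_vars d1 y)))"
  have feasible_iff: "feasible G E (m1 + m2) y \<longleftrightarrow> feasible G1 E1 m1 y
      \<and> feasible G2 E2 m2 (shift_vars d1 y) \<and> eval_map F1 y = eval_map F2 (shift_vars d1 y)" for y
  proof -
    have "feasible G E (m1 + m2) y \<longleftrightarrow> feasible G1 E1 m1 y \<and> feasible (\<lambda>i y. G2 i (shift_vars d1 y))
        ((\<lambda>e y. e (shift_vars d1 y)) ` E2 \<union> range (\<lambda>k y. F1 k y - F2 k (shift_vars d1 y))) m2 y"
      unfolding G_def E_def by (rule feasible_append)
    then show ?thesis by (simp add: feasible_def vec_eq_iff ball_Un)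
  qed
  have "P1 \<inter> P2 = eval_map F1 ` {y. feasible G E (m1 + m2) y}"
  proof (intro equalityI subsetI)
    fix x assume "x \<in> P1 \<inter> P2"
    then obtain y1 y2 where "feasible G1 E1 m1 y1" "x = eval_map F1 y1"
      and "feasible G2 E2 m2 y2" "x = eval_map F2 y2"
      using rep1 rep2 unfolding ext_rep_def by blast
    then show "x \<in> eval_map F1 ` {y. feasible G E (m1 + m2) y}"
      using feasible_iff ext_rep_join_vars[OF rep1]
      by (intro image_eqI[of _ _ "join_vars d1 y1 y2"]) auto
  next
    fix x assume "x \<in> eval_map F1 ` {y. feasible G E (m1 + m2) y}"
    then obtain y where y: "feasible G E (m1 + m2) y" and x: "x = eval_map F1 y" by blast
    then have "x \<in> P1" using feasible_iff rep1 unfolding ext_rep_def by blast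
    moreover have "x = eval_map F2 (shift_vars d1 y)" "feasible G2 E2 m2 (shift_vars d1 y)"
      using feasible_iff y x by auto
    ultimately show "x \<in> P1 \<inter> P2" using rep2 unfolding ext_rep_def by blast
  qed
  moreover have "affine_fun (d1 + d2) f" if "affine_fun d1 f" for f
    using affine_fun_mono[OF that] by simp
  moreover note affine_fun_shift_vars[of d2 _ d1]
  ultimately have "ext_rep (d1 + d2) F1 G E (m1 + m2) (P1 \<inter> P2)"
    using rep1 rep2 unfolding ext_rep_def G_def E_def by (auto intro: affine_fun_diff)
  then show ?thesis unfolding has_ext_rep_def by blast
qed

section \<open>The convex hull of a union\<close>

definition homog_feasible :: "(nat \<Rightarrow> (nat \<Rightarrow> real) \<Rightarrow> real) \<Rightarrow> ((nat \<Rightarrow> real) \<Rightarrow> real) set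
    \<Rightarrow> nat \<Rightarrow> (nat \<Rightarrow> real) \<Rightarrow> real \<Rightarrow> bool" where
  "homog_feasible G E m z l \<longleftrightarrow> (\<forall>i<m. 0 \<le> homog (G i) z l) \<and> (\<forall>e\<in>E. homog e z l = 0)"

lemma homog_feasible_scale:
  assumes "ext_rep d F G E m P" "feasible G E m y" "0 \<le> l"
  shows "homog_feasible G E m (\<lambda>j. l * y j) l"
  using assms unfolding ext_rep_def feasible_def homog_feasible_def by (simp add: homog_scale[of d])

lemma feasible_ray:
  assumes "ext_rep d F G E m P" "feasible G E m y" "homog_feasible G E m v 0" "0 \<le> t"
  shows "feasible G E m (\<lambda>j. y j + t * v j)"
  using assms unfolding ext_rep_def feasible_def homog_feasible_def by (simp add: homog_ray[of d])

lemma bounded_ray_direction_zero: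
  fixes a v :: "'a::real_normed_vector"
  assumes "bounded S" "\<And>t. 0 \<le> t \<Longrightarrow> a + t *\<^sub>R v \<in> S"
  shows "v = 0"
proof (rule ccontr)
  assume "v \<noteq> 0"
  obtain B where B: "\<And>x. x \<in> S \<Longrightarrow> norm x \<le> B" using assms(1) bounded_iff by blast
  define t where "t = (B + norm a + 1) / norm v"
  have "norm a \<le> B" using B[OF assms(2)[of 0]] by simp
  then have "0 \<le> B" using norm_ge_zero[of a] by linarith
  then have "0 \<le> t" and "norm (t *\<^sub>R v) = B + norm a + 1"
    using \<open>v \<noteq> 0\<close> unfolding t_def by simp_all
  moreover have "norm (t *\<^sub>R v) \<le> norm (a + t *\<^sub>R v) + norm a"
    using norm_triangle_ineq4[of "a + t *\<^sub>R v" a] by (simp add: norm_minus_commute)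
  ultimately show False using B[OF assms(2)] by fastforce
qed

lemma ext_rep_recession:
  assumes rep: "ext_rep d F G E m P" and "bounded P"
    and "feasible G E m y" "homog_feasible G E m v 0"
  shows "homog (F k) v 0 = 0"
proof -
  have F_affine: "affine_fun d (F k)" for k using rep unfolding ext_rep_def by blast
  have "(\<chi> k. homog (F k) v 0) = 0"
  proof (rule bounded_ray_direction_zero[OF \<open>bounded P\<close>])
    fix t :: real assume "0 \<le> t"
    then have "eval_map F (\<lambda>j. y j + t * v j) \<in> P"
      using feasible_ray[OF rep assms(3,4)] rep unfolding ext_rep_def by blast
    moreover have "eval_map F (\<lambda>j. y j + t * v j) = eval_map F y + t *\<^sub>R (\<chi> k. homog (F k) v 0)"
      by (simp add: homog_ray[OF F_affine] vec_eq_iff)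
    ultimately show "eval_map F y + t *\<^sub>R (\<chi> k. homog (F k) v 0) \<in> P" by simp
  qed
  then show ?thesis by (metis vec_lambda_beta zero_index)
qed

text \<open>This makes Balas' description in convex_hull_Un_homog exact. It holds for formulations
  of bounded sets other than singletons (ext_rep_homog_bounded); a singleton gets the
  formulation ext_rep_singleton instead, whose trivial constraints 1 \<ge> 0 homogenise to l \<ge> 0.\<close>

definition homog_bounded :: "('n \<Rightarrow> (nat \<Rightarrow> real) \<Rightarrow> real) \<Rightarrow> (nat \<Rightarrow> (nat \<Rightarrow> real) \<Rightarrow> real)
    \<Rightarrow> ((nat \<Rightarrow> real) \<Rightarrow> real) set \<Rightarrow> nat \<Rightarrow> bool" where
  "homog_bounded F G E m \<longleftrightarrow> (\<forall>z l. homog_feasible G E m z l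
     \<longrightarrow> 0 \<le> l \<and> (l = 0 \<longrightarrow> (\<forall>k. homog (F k) z 0 = 0)))"

lemma ext_rep_homog_bounded:
  assumes rep: "ext_rep d F G E m P" and "bounded P" "P \<noteq> {}" "\<And>p. P \<noteq> {p}"
  shows "homog_bounded F G E m"
  unfolding homog_bounded_def
proof (intro allI impI conjI)
  fix z l assume hz: "homog_feasible G E m z l"
  have affine: "\<forall>k. affine_fun d (F k)" "\<forall>i. affine_fun d (G i)" "\<forall>e\<in>E. affine_fun d e"
    and P: "P = eval_map F ` {y. feasible G E m y}" using rep unfolding ext_rep_def by auto
  obtain y0 where y0: "feasible G E m y0" using P \<open>P \<noteq> {}\<close> by blast
  show "0 \<le> l"
  proof (rule ccontr)
    assume "\<not> 0 \<le> l"
    define w where "w j = z j / l" for j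
    have "homog f z l = l * f w" if "affine_fun d f" for f
      using homog_scale[OF that, of l w] \<open>\<not> 0 \<le> l\<close> unfolding w_def by simp
    then have "\<forall>i<m. G i w \<le> 0" "\<forall>e\<in>E. e w = 0"
      using hz affine \<open>\<not> 0 \<le> l\<close> unfolding homog_feasible_def by (auto simp: zero_le_mult_iff)
    then have "homog_feasible G E m (\<lambda>j. y j - w j) 0" if "feasible G E m y" for y
      using that affine unfolding feasible_def homog_feasible_def
      by (auto simp: homog_diff[of d] intro: order_trans)
    then have recession: "homog (F k) (\<lambda>j. y j - w j) 0 = 0" if "feasible G E m y" for y k
      using ext_rep_recession[OF rep \<open>bounded P\<close> that] that by blast
    have "F k y = F k w" if "feasible G E m y" for y k
      using recession[OF that, of k] affine homog_diff[of d "F k" y w] by simp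
    then have "P \<subseteq> {eval_map F w}" using P by (auto simp: vec_eq_iff)
    then have "P = {eval_map F w}" using \<open>P \<noteq> {}\<close> by blast
    then show False using assms(4) by blast
  qed
  fix k assume "l = 0"
  then show "homog (F k) z 0 = 0" using ext_rep_recession[OF rep \<open>bounded P\<close> y0] hz by blast
qed

lemma ext_rep_singleton:
  assumes "1 \<le> m"
  shows "ext_rep 0 (\<lambda>k y. p $ k) (\<lambda>i y. 1) {} m {p} \<and> homog_bounded (\<lambda>k y. p $ k) (\<lambda>i y. 1) {} m"
  using assms affine_fun_const
  by (auto simp: ext_rep_def homog_bounded_def homog_feasible_def homog_def feasible_def
      eval_map_def Suc_le_eq)

lemma homog_feasible_point:
  assumes rep: "ext_rep d F G E m P" and "homog_bounded F G E m" "P \<noteq> {}"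
    and "homog_feasible G E m z l"
  shows "0 \<le> l \<and> (\<exists>p\<in>P. \<forall>k. homog (F k) z l = l * p $ k)"
proof (cases "l = 0")
  case True
  then show ?thesis using assms(2-4) unfolding homog_bounded_def by auto
next
  case False
  then have "0 < l" using assms(2,4) unfolding homog_bounded_def by force
  define y where "y j = z j / l" for j
  have scale: "homog f z l = l * f y" if "affine_fun d f" for f
    using homog_scale[OF that, of l y] \<open>0 < l\<close> unfolding y_def by simp
  then have "feasible G E m y"
    using assms(4) rep \<open>0 < l\<close> unfolding homog_feasible_def ext_rep_def feasible_def
    by (auto simp: zero_le_mult_iff)
  then have "eval_map F y \<in> P" using rep unfolding ext_rep_def by blast
  moreover have "\<forall>k. homog (F k) z l = l * eval_map F y $ k" using scale rep unfolding ext_rep_def by simp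
  ultimately show ?thesis using \<open>0 < l\<close> less_imp_le by blast
qed

lemma ext_rep_homog_join_vars:
  assumes "ext_rep d F G E m P"
  shows "homog_feasible G E m (join_vars d y z) l \<longleftrightarrow> homog_feasible G E m y l"
    and "homog (F k) (join_vars d y z) l = homog (F k) y l"
  using assms unfolding ext_rep_def homog_feasible_def by (simp_all add: homog_join_vars[of d])

lemma convex_hull_Un_homog:
  assumes rep1: "ext_rep d1 F1 G1 E1 m1 P1" "homog_bounded F1 G1 E1 m1" "P1 \<noteq> {}" "convex P1"
    and rep2: "ext_rep d2 F2 G2 E2 m2 P2" "homog_bounded F2 G2 E2 m2" "P2 \<noteq> {}" "convex P2"
  shows "convex hull (P1 \<union> P2) = {(\<chi> k. homog (F1 k) z1 l + homog (F2 k) z2 (1 - l)) | z1 z2 l.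
    homog_feasible G1 E1 m1 z1 l \<and> homog_feasible G2 E2 m2 z2 (1 - l)}"
proof (intro equalityI subsetI)
  fix x assume "x \<in> convex hull (P1 \<union> P2)"
  then obtain u y1 y2 where u: "0 \<le> u" "0 \<le> 1 - u" and y1: "feasible G1 E1 m1 y1"
    and y2: "feasible G2 E2 m2 y2" and x: "x = u *\<^sub>R eval_map F1 y1 + (1 - u) *\<^sub>R eval_map F2 y2"
    using rep1(1) rep2(1) unfolding convex_hull_union_two[OF rep1(4,3) rep2(4,3)] ext_rep_def
    by (auto simp: eq_diff_eq')
  have "x = (\<chi> k. homog (F1 k) (\<lambda>j. u * y1 j) u + homog (F2 k) (\<lambda>j. (1 - u) * y2 j) (1 - u))"
    using rep1(1) rep2(1) unfolding x ext_rep_def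
    by (simp add: vec_eq_iff homog_scale[of d1] homog_scale[of d2])
  then show "x \<in> {(\<chi> k. homog (F1 k) z1 l + homog (F2 k) z2 (1 - l)) | z1 z2 l.
      homog_feasible G1 E1 m1 z1 l \<and> homog_feasible G2 E2 m2 z2 (1 - l)}"
    using homog_feasible_scale[OF rep1(1) y1 u(1)] homog_feasible_scale[OF rep2(1) y2 u(2)] by blast
next
  fix x assume "x \<in> {(\<chi> k. homog (F1 k) z1 l + homog (F2 k) z2 (1 - l)) | z1 z2 l.
      homog_feasible G1 E1 m1 z1 l \<and> homog_feasible G2 E2 m2 z2 (1 - l)}"
  then obtain z1 z2 l where x: "x = (\<chi> k. homog (F1 k) z1 l + homog (F2 k) z2 (1 - l))"
    and "homog_feasible G1 E1 m1 z1 l" "homog_feasible G2 E2 m2 z2 (1 - l)" by blast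
  then obtain p1 p2 where "0 \<le> l" "p1 \<in> P1" "\<forall>k. homog (F1 k) z1 l = l * p1 $ k"
    and "0 \<le> 1 - l" "p2 \<in> P2" "\<forall>k. homog (F2 k) z2 (1 - l) = (1 - l) * p2 $ k"
    using homog_feasible_point[OF rep1(1-3)] homog_feasible_point[OF rep2(1-3)] by meson
  then show "x \<in> convex hull (P1 \<union> P2)"
    unfolding convex_hull_union_two[OF rep1(4,3) rep2(4,3)] x
    by (intro CollectI exI[of _ l] exI[of _ "1 - l"] exI[of _ p1] exI[of _ p2]) (auto simp: vec_eq_iff)
qed

lemma ext_rep_convex_hull_Un:
  assumes rep1: "ext_rep d1 F1 G1 E1 m1 P1" "homog_bounded F1 G1 E1 m1" "P1 \<noteq> {}" "convex P1"
    and rep2: "ext_rep d2 F2 G2 E2 m2 P2" "homog_bounded F2 G2 E2 m2" "P2 \<noteq> {}" "convex P2"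
  shows "has_ext_rep (convex hull (P1 \<union> P2)) (m1 + m2)"
proof -
  define N where "N = d1 + d2"
  define H1 where "H1 f y = homog f y (y N)" for f y
  define H2 where "H2 f y = homog f (shift_vars d1 y) (1 - y N)" for f y
  define F where "F k y = H1 (F1 k) y + H2 (F2 k) y" for k y
  define G where "G i = (if i < m1 then H1 (G1 i) else H2 (G2 (i - m1)))" for i
  define E where "E = H1 ` E1 \<union> H2 ` E2"
  have feasible_iff: "feasible G E (m1 + m2) y \<longleftrightarrow> homog_feasible G1 E1 m1 y (y N)
      \<and> homog_feasible G2 E2 m2 (shift_vars d1 y) (1 - y N)" for y
    using feasible_append[of m1 "\<lambda>i. H1 (G1 i)" "\<lambda>i. H2 (G2 i)"] unfolding G_def E_def
    by (simp add: feasible_def homog_feasible_def H1_def H2_def)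
  have "convex hull (P1 \<union> P2) = eval_map F ` {y. feasible G E (m1 + m2) y}"
    unfolding convex_hull_Un_homog[OF rep1 rep2]
  proof (intro equalityI subsetI)
    fix x assume "x \<in> {(\<chi> k. homog (F1 k) z1 l + homog (F2 k) z2 (1 - l)) | z1 z2 l.
      homog_feasible G1 E1 m1 z1 l \<and> homog_feasible G2 E2 m2 z2 (1 - l)}"
    then obtain z1 z2 l where x: "x = (\<chi> k. homog (F1 k) z1 l + homog (F2 k) z2 (1 - l))"
      and z: "homog_feasible G1 E1 m1 z1 l" "homog_feasible G2 E2 m2 z2 (1 - l)" by blast
    define y where "y = join_vars d1 z1 (join_vars d2 z2 (\<lambda>j. l))"
    have "y N = l" unfolding y_def N_def join_vars_def by simp
    then have "feasible G E (m1 + m2) y" and "x = eval_map F y"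
      using z ext_rep_homog_join_vars[OF rep1(1)] ext_rep_homog_join_vars[OF rep2(1)]
      unfolding feasible_iff x F_def H1_def H2_def y_def by (simp_all add: vec_eq_iff)
    then show "x \<in> eval_map F ` {y. feasible G E (m1 + m2) y}" by blast
  next
    fix x assume "x \<in> eval_map F ` {y. feasible G E (m1 + m2) y}"
    then show "x \<in> {(\<chi> k. homog (F1 k) z1 l + homog (F2 k) z2 (1 - l)) | z1 z2 l.
      homog_feasible G1 E1 m1 z1 l \<and> homog_feasible G2 E2 m2 z2 (1 - l)}"
      unfolding feasible_iff F_def H1_def H2_def eval_map_def by blast
  qed
  moreover have "affine_fun (N + 1) (\<lambda>y. y N)" by (rule affine_fun_coord) simp
  moreover have "affine_fun (N + 1) f" if "affine_fun d1 f" for f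
    using affine_fun_mono[OF that] unfolding N_def by simp
  moreover have "affine_fun (N + 1) (\<lambda>y. f (shift_vars d1 y))" if "affine_fun d2 f" for f
    using affine_fun_mono[OF affine_fun_shift_vars[OF that]] unfolding N_def by simp
  ultimately have "ext_rep (N + 1) F G E (m1 + m2) (convex hull (P1 \<union> P2))"
    using rep1(1) rep2(1) unfolding ext_rep_def F_def G_def E_def H1_def H2_def
    by (auto intro!: affine_fun_add affine_fun_homog affine_fun_diff affine_fun_const)
  then show ?thesis unfolding has_ext_rep_def by blast
qed

lemma has_ext_rep_homog_bounded:
  assumes "has_ext_rep P m" "1 \<le> m" "polytope P" "P \<noteq> {}"
  obtains d F G E where "ext_rep d F G E m P" "homog_bounded F G E m"
proof (cases "\<exists>p. P = {p}")
  case True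
  then show ?thesis using ext_rep_singleton[OF assms(2)] that by blast
next
  case False
  obtain d F G E where "ext_rep d F G E m P" using assms(1) unfolding has_ext_rep_def by blast
  then show ?thesis
    using ext_rep_homog_bounded polytope_imp_bounded[OF assms(3)] assms(4) False that by blast
qed

lemma has_ext_rep_convex_hull_Un:
  fixes P1 P2 :: "(real ^ 'n::finite) set"
  assumes rep1: "P1 \<noteq> {} \<Longrightarrow> has_ext_rep P1 m1" and rep2: "P2 \<noteq> {} \<Longrightarrow> has_ext_rep P2 m2"
    and "1 \<le> m1" "1 \<le> m2" "polytope P1" "polytope P2" "P1 \<union> P2 \<noteq> {}"
  shows "has_ext_rep (convex hull (P1 \<union> P2)) (m1 + m2)"
proof -
  have "convex P1" "convex P2" using assms(5,6) polytope_imp_convex by blast+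
  consider "P1 = {}" | "P2 = {}" | "P1 \<noteq> {}" "P2 \<noteq> {}" by blast
  then show ?thesis
  proof cases
    case 1
    then have "convex hull (P1 \<union> P2) = P2" using \<open>convex P2\<close> by (simp add: convex_hull_eq)
    then show ?thesis using 1 rep2 assms(7) has_ext_rep_mono[OF _ le_add2] by simp
  next
    case 2
    then have "convex hull (P1 \<union> P2) = P1" using \<open>convex P1\<close> by (simp add: convex_hull_eq)
    then show ?thesis using 2 rep1 assms(7) has_ext_rep_mono[OF _ le_add1] by simp
  next
    case 3
    obtain d1 F1 G1 E1 where "ext_rep d1 F1 G1 E1 m1 P1" "homog_bounded F1 G1 E1 m1"
      using has_ext_rep_homog_bounded rep1 assms(3,5) 3(1) by blast
    moreover obtain d2 F2 G2 E2 where "ext_rep d2 F2 G2 E2 m2 P2" "homog_bounded F2 G2 E2 m2"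
      using has_ext_rep_homog_bounded rep2 assms(4,6) 3(2) by blast
    ultimately show ?thesis using ext_rep_convex_hull_Un 3 \<open>convex P1\<close> \<open>convex P2\<close> by blast
  qed
qed

section \<open>Polytopes\<close>

lemma convex_hull_eq_simplex_image:
  fixes f :: "nat \<Rightarrow> 'a::real_vector"
  assumes f: "bij_betw f {..<k} V"
  shows "convex hull V = (\<lambda>y. \<Sum>j<k. y j *\<^sub>R f j) ` {y. (\<forall>j<k. 0 \<le> y j) \<and> (\<Sum>j<k. y j) = 1}"
    (is "_ = ?S")
proof -
  have hull: "convex hull V = {x. \<exists>u. (\<forall>v\<in>V. 0 \<le> u v) \<and> (\<Sum>j<k. u (f j)) = 1
      \<and> (\<Sum>j<k. u (f j) *\<^sub>R f j) = x}"
    using bij_betw_finite[of f "{..<k}" V] f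
    by (simp only: convex_hull_finite sum.reindex_bij_betw[OF f, symmetric] finite_lessThan simp_thms)
  have "x \<in> convex hull V \<longleftrightarrow> x \<in> ?S" for x
  proof
    assume "x \<in> convex hull V"
    then obtain u where u: "\<forall>v\<in>V. 0 \<le> u v" "(\<Sum>j<k. u (f j)) = 1" "x = (\<Sum>j<k. u (f j) *\<^sub>R f j)"
      unfolding hull by blast
    moreover have "\<forall>j<k. 0 \<le> u (f j)" using u(1) bij_betwE[OF f] by blast
    ultimately show "x \<in> ?S" by (intro image_eqI[of _ _ "\<lambda>j. u (f j)"]) simp_all
  next
    assume "x \<in> ?S"
    then obtain y where y: "\<forall>j<k. 0 \<le> y j" "(\<Sum>j<k. y j) = 1" "x = (\<Sum>j<k. y j *\<^sub>R f j)" by blast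
    define u where "u v = y (inv_into {..<k} f v)" for v
    have u_f: "u (f j) = y j" if "j < k" for j
      using bij_betw_inv_into_left[OF f] that by (simp add: u_def)
    have "(\<Sum>j<k. u (f j)) = (\<Sum>j<k. y j)" "(\<Sum>j<k. u (f j) *\<^sub>R f j) = (\<Sum>j<k. y j *\<^sub>R f j)"
      using u_f by (auto intro: sum.cong)
    moreover have "\<forall>v\<in>V. 0 \<le> u v"
      using y(1) inv_into_into[of _ f "{..<k}"] bij_betw_imp_surj_on[OF f] unfolding u_def by blast
    ultimately show "x \<in> convex hull V" using y unfolding hull by auto
  qed
  then show ?thesis by blast
qed

lemma polytope_has_ext_formulation:
  fixes Q :: "(real ^ 'n::finite) set"
  assumes "polytope Q" "Q \<noteq> {}"
  shows "\<exists>m. has_ext_formulation Q m"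
proof -
  obtain V where V: "finite V" "Q = convex hull V" using assms(1) unfolding polytope_def by blast
  obtain f where f: "bij_betw f {..<card V} V"
    using ex_bij_betw_nat_finite[OF V(1)] by (auto simp: atLeast0LessThan)
  define k where "k = card V"
  define F where "F c y = (\<Sum>j<k. f j $ c * y j)" for c y
  define G where "G i = (if i < k then (\<lambda>y :: nat \<Rightarrow> real. y i) else (\<lambda>y. 1))" for i
  define E where "E = {\<lambda>y :: nat \<Rightarrow> real. (\<Sum>j<k. 1 * y j) - 1}"
  have "eval_map F y = (\<Sum>j<k. y j *\<^sub>R f j)" for y
    by (simp add: F_def vec_eq_iff sum_component mult.commute)
  moreover have "feasible G E k y \<longleftrightarrow> (\<forall>j<k. 0 \<le> y j) \<and> (\<Sum>j<k. y j) = 1" for y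
    by (simp add: feasible_def G_def E_def)
  ultimately have "Q = eval_map F ` {y. feasible G E k y}"
    using convex_hull_eq_simplex_image[OF f] unfolding V(2) k_def by simp
  moreover have "affine_fun k (F c)" for c
    unfolding F_def affine_fun_def by (intro exI[of _ "\<lambda>j. f j $ c"] exI[of _ 0]) simp
  moreover have "affine_fun k (G i)" for i
    by (simp add: G_def affine_fun_coord affine_fun_const)
  moreover have "\<forall>e\<in>E. affine_fun k e"
    unfolding E_def affine_fun_def by (intro ballI exI[of _ "\<lambda>j. 1"] exI[of _ "-1"]) simp
  ultimately have "ext_rep k F G E k Q" unfolding ext_rep_def E_def by simp
  then show ?thesis
    using ext_rep_elim_eqs assms(2) has_ext_formulation_iff_ext_rep by metis
qed

lemma polytope_coord_eq:
  fixes Q :: "(real ^ 'n::finite) set"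
  assumes "polytope Q"
  shows "polytope {x \<in> Q. x $ i = c}"
proof -
  have "polyhedron {x :: real ^ 'n. x $ i = c}"
    using polyhedron_hyperplane[of "axis i (1::real)" c] by (simp add: inner_axis')
  moreover have "{x \<in> Q. x $ i = c} = Q \<inter> {x. x $ i = c}" by blast
  ultimately show ?thesis using polytope_Int_polyhedron[OF assms] by simp
qed

section \<open>Boolean formulas\<close>

lemma fsize_pos: "1 \<le> fsize \<phi>"
  by (induction \<phi>) auto

lemma fapply_subset: "convex Q \<Longrightarrow> fapply \<phi> Q \<subseteq> Q"
proof (induction \<phi>)
  case (Disj a b)
  then show ?case by (simp add: hull_minimal)
qed auto

lemma polytope_fapply: "polytope Q \<Longrightarrow> polytope (fapply \<phi> Q)"
proof (induction \<phi>)
  case (Disj a b)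
  then obtain V W where "finite V" "fapply a Q = convex hull V" "finite W" "fapply b Q = convex hull W"
    unfolding polytope_def by auto
  moreover have "convex hull (convex hull V \<union> convex hull W) = convex hull (V \<union> W)"
    by (metis hull_Un_left hull_Un_right)
  ultimately show ?case by (simp add: polytope_convex_hull)
qed (simp_all add: polytope_coord_eq polytope_Int)

lemma has_ext_rep_fapply:
  fixes Q :: "(real ^ 'n::finite) set"
  assumes "has_ext_rep Q m" "1 \<le> m" "polytope Q"
  shows "fapply \<phi> Q \<noteq> {} \<Longrightarrow> has_ext_rep (fapply \<phi> Q) (fsize \<phi> * m)"
proof (induction \<phi>)
  case (Conj a b)
  then have "has_ext_rep (fapply a Q) (fsize a * m)" "has_ext_rep (fapply b Q) (fsize b * m)" by auto
  then show ?case using has_ext_rep_Int by (fastforce simp: add_mult_distrib)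
next
  case (Disj a b)
  have "1 \<le> fsize a * m" "1 \<le> fsize b * m" using fsize_pos assms(2) by (simp_all add: one_le_mult_iff)
  moreover have "fapply a Q \<union> fapply b Q \<noteq> {}" using Disj.prems by auto
  ultimately have "has_ext_rep (convex hull (fapply a Q \<union> fapply b Q)) (fsize a * m + fsize b * m)"
    using has_ext_rep_convex_hull_Un Disj.IH polytope_fapply[OF assms(3)] by blast
  then show ?case by (simp add: add_mult_distrib)
qed (simp_all add: has_ext_rep_coord_eq assms(1))

lemma has_ext_formulation_fapply:
  fixes Q :: "(real ^ 'n::finite) set"
  assumes "has_ext_formulation Q m" "1 \<le> m" "polytope Q" "fapply \<phi> Q \<noteq> {}"
  shows "has_ext_formulation (fapply \<phi> Q) (fsize \<phi> * m)"
proof -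
  have "has_ext_rep Q m" using assms(1) unfolding has_ext_formulation_iff_ext_rep has_ext_rep_def by blast
  then obtain d F G E where "ext_rep d F G E (fsize \<phi> * m) (fapply \<phi> Q)"
    using has_ext_rep_fapply assms(2-4) unfolding has_ext_rep_def by blast
  then show ?thesis using ext_rep_elim_eqs assms(4) unfolding has_ext_formulation_iff_ext_rep by blast
qed

lemma has_ext_formulation_0_singleton:
  assumes "has_ext_formulation P 0" "bounded P" "P \<noteq> {}"
  shows "\<exists>p. P = {p}"
proof (rule ccontr)
  assume "\<nexists>p. P = {p}"
  obtain d F G where "ext_rep d F G {} 0 P" using assms(1) has_ext_formulation_iff_ext_rep by blast
  then have "homog_bounded F G {} 0" using ext_rep_homog_bounded assms(2,3) \<open>\<nexists>p. P = {p}\<close> by blast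
  then have "0 \<le> (-1::real)" unfolding homog_bounded_def homog_feasible_def by blast
  then show False by simp
qed

theorem proposition4p2:
  fixes \<phi> :: "'n::finite rformula" and Q :: "(real ^ 'n) set"
  assumes "polytope Q"
    and "\<forall>x\<in>Q. \<forall>i. 0 \<le> x $ i \<and> x $ i \<le> 1"
    and "fapply \<phi> Q \<noteq> {}"
  shows "polytope (fapply \<phi> Q) \<and> xc (fapply \<phi> Q) \<le> fsize \<phi> * xc Q"
proof
  show "polytope (fapply \<phi> Q)" using polytope_fapply[OF assms(1)] .
  have "fapply \<phi> Q \<subseteq> Q" using fapply_subset polytope_imp_convex[OF assms(1)] by blast
  then have "Q \<noteq> {}" using assms(3) by blast
  then obtain m where "has_ext_formulation Q m" using polytope_has_ext_formulation[OF assms(1)] by blast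
  then have Q: "has_ext_formulation Q (xc Q)" unfolding xc_def by (rule LeastI)
  show "xc (fapply \<phi> Q) \<le> fsize \<phi> * xc Q"
  proof (cases "xc Q = 0")
    case True
    then obtain q where "Q = {q}"
      using has_ext_formulation_0_singleton[OF _ polytope_imp_bounded[OF assms(1)] \<open>Q \<noteq> {}\<close>] Q
      by auto
    then have "fapply \<phi> Q = Q" using \<open>fapply \<phi> Q \<subseteq> Q\<close> assms(3) by blast
    then show ?thesis using True by simp
  next
    case False
    then have "has_ext_formulation (fapply \<phi> Q) (fsize \<phi> * xc Q)"
      using has_ext_formulation_fapply[OF Q _ assms(1,3)] by simp
    then show ?thesis unfolding xc_def by (rule Least_le)
  qed
qed

end
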